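(* Let $A,B,D\subset\mathbb R^n$ and let $\varphi: D\times B\to\mathbb R^n$ satisfy: (a) there is $C_0>0$ such that $\|\varphi(t,x)-\varphi(t,y)\|\le C_0\|x-y\|$ for all $x,y\in B$, $t\in D$; (b) there is $M_0>0$ such that $\|\varphi(t',x)-\varphi(t,x)\|\ge M_0\|t'-t\|$ for all $x\in B$ and $t,t'\in D$. Then the set $\Delta:=\{t\in D:\ \varphi(t,B)\cap A\ne\varnothing\}$ satisfies $\dim_H\Delta\le\min\{\dim_H(A\times B),\dim_H D\}$. Moreover, if $A$ and $B$ are compact and $\varphi$ is continuous, then $\Delta$ is closed in $D$.
   Context: $\dim_H$ denotes Hausdorff dimension; $A\times B\subset\mathbb R^{2n}$ with the Euclidean metric. *)

theory Defs
  imports "HOL-Analysis.Analysis"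
begin

definition hausdorff_pre :: "real \<Rightarrow> real \<Rightarrow> 'a::metric_space set \<Rightarrow> ennreal" where
  "hausdorff_pre s \<delta> E =
     (INF U \<in> {U :: nat \<Rightarrow> 'a set. E \<subseteq> (\<Union>i. U i) \<and> (\<forall>i. bounded (U i) \<and> diameter (U i) \<le> \<delta>)}.
        (\<Sum>i. ennreal (diameter (U i) powr s)))"

definition hausdorff_measure :: "real \<Rightarrow> 'a::metric_space set \<Rightarrow> ennreal" where
  "hausdorff_measure s E = (SUP \<delta> \<in> {0<..}. hausdorff_pre s \<delta> E)"

text \<open>dim_H E = inf of s > 0 with H^s(E) = 0 (infinity if there is none). Since
  H^s(E) = 0 implies H^t(E) = 0 for t > s, this agrees with the usual definition.\<close>

definition hausdorff_dim :: "'a::metric_space set \<Rightarrow> ereal" where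
  "hausdorff_dim E = (INF s \<in> {s::real. s > 0 \<and> hausdorff_measure s E = 0}. ereal s)"

end

theory Submission
  imports Defs
begin

text \<open>Every parameter t in the hitting set is recovered from a witness pair (\<phi> t x, x) \<in> A \<times> B:
  the separation condition makes t unique, and together with the Lipschitz condition it gives
  M0 |t - t'| \<le> C0 |x - x'| + |\<phi> t x - \<phi> t' x'|, so the map back from the witness pairs to the
  parameters is Lipschitz, and Lipschitz maps do not increase Hausdorff dimension. Closedness is the projection of a closed set along the compact factor B.\<close>

lemma lipschitz_image_diameter_le:
  fixes g :: "'a::metric_space \<Rightarrow> 'b::metric_space"
  assumes lip: "C-lipschitz_on X g" and X: "bounded X"
  shows "bounded (g ` X)" and "diameter (g ` X) \<le> C * diameter X"
proof -
  have dist_le: "dist (g x) (g y) \<le> C * diameter X" if "x \<in> X" "y \<in> X" for x y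
  proof -
    have "dist (g x) (g y) \<le> C * dist x y"
      using lip that by (rule lipschitz_onD)
    also have "\<dots> \<le> C * diameter X"
      using diameter_bounded_bound[OF X that] lipschitz_on_nonneg[OF lip] by (rule mult_left_mono)
    finally show ?thesis .
  qed
  show "bounded (g ` X)"
  proof (cases "X = {}")
    case False
    then obtain x0 where "x0 \<in> X" by blast
    with dist_le show ?thesis unfolding bounded_def by blast
  qed simp
  show "diameter (g ` X) \<le> C * diameter X"
  proof (cases "X = {}")
    case False
    then show ?thesis
      unfolding diameter_def[of "g ` X"] using dist_le by (auto intro!: cSUP_least)
  qed simp
qed

lemma hausdorff_pre_mono: "F \<subseteq> E \<Longrightarrow> hausdorff_pre s \<delta> F \<le> hausdorff_pre s \<delta> E"
  unfolding hausdorff_pre_def by (rule INF_superset_mono) auto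

lemma hausdorff_measure_eq_0_iff:
  "hausdorff_measure s E = 0 \<longleftrightarrow> (\<forall>\<delta>>0. hausdorff_pre s \<delta> E = 0)"
  unfolding hausdorff_measure_def by (simp add: bot_ennreal[symmetric]) (simp add: Ball_def)

lemma hausdorff_measure_mono: "F \<subseteq> E \<Longrightarrow> hausdorff_measure s F \<le> hausdorff_measure s E"
  unfolding hausdorff_measure_def by (intro SUP_mono) (auto intro: hausdorff_pre_mono)

lemma hausdorff_dim_mono: "F \<subseteq> E \<Longrightarrow> hausdorff_dim F \<le> hausdorff_dim E"
  unfolding hausdorff_dim_def
  by (rule INF_superset_mono) (auto simp flip: le_zero_eq dest: hausdorff_measure_mono order.trans)

lemma hausdorff_pre_lipschitz_image_eq_0:
  fixes g :: "'a::metric_space \<Rightarrow> 'b::metric_space"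
  assumes lip: "C-lipschitz_on E g" and C: "C > 0" and s: "s > 0"
    and null: "hausdorff_pre s (\<delta> / C) E = 0"
  shows "hausdorff_pre s \<delta> (g ` E) = 0"
proof -
  define c where "c = C powr s"
  have c: "c > 0" using C by (simp add: c_def)
  have "hausdorff_pre s \<delta> (g ` E) \<le> 0"
  proof (rule ennreal_le_epsilon)
    fix e :: real assume e: "e > 0"
    obtain U where U_cover: "E \<subseteq> (\<Union>i. U i)" and U_bounded: "\<And>i. bounded (U i)"
      and U_diam: "\<And>i. diameter (U i) \<le> \<delta> / C"
      and U_sum: "(\<Sum>i. ennreal (diameter (U i) powr s)) < ennreal (e / c)"
    proof -
      have "\<exists>U \<in> {U. E \<subseteq> (\<Union>i. U i) \<and> (\<forall>i. bounded (U i) \<and> diameter (U i) \<le> \<delta> / C)}.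
          (\<Sum>i. ennreal (diameter (U i) powr s)) < 0 + ennreal (e / c)"
        by (rule INF_approx_ennreal) (use null e c in \<open>auto simp: hausdorff_pre_def\<close>)
      with that show ?thesis by auto
    qed
    define V where "V i = g ` (U i \<inter> E)" for i
    have V_bounded: "bounded (V i)" and V_diam: "diameter (V i) \<le> C * diameter (U i)" for i
    proof -
      have lip_i: "C-lipschitz_on (U i \<inter> E) g" and bounded_i: "bounded (U i \<inter> E)"
        using lipschitz_on_subset[OF lip] U_bounded[of i] by auto
      show "bounded (V i)"
        unfolding V_def by (rule lipschitz_image_diameter_le(1)[OF lip_i bounded_i])
      have "diameter (V i) \<le> C * diameter (U i \<inter> E)"
        unfolding V_def by (rule lipschitz_image_diameter_le(2)[OF lip_i bounded_i])
      also have "\<dots> \<le> C * diameter (U i)"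
        using diameter_subset[of "U i \<inter> E" "U i"] U_bounded[of i] C by simp
      finally show "diameter (V i) \<le> C * diameter (U i)" .
    qed
    have "diameter (V i) \<le> \<delta>" for i
      using V_diam[of i] mult_left_mono[OF U_diam[of i], of C] C by simp
    moreover have "g ` E \<subseteq> (\<Union>i. V i)"
      using U_cover unfolding V_def by blast
    ultimately have "hausdorff_pre s \<delta> (g ` E) \<le> (\<Sum>i. ennreal (diameter (V i) powr s))"
      unfolding hausdorff_pre_def using V_bounded by (intro INF_lower) auto
    also have "\<dots> \<le> (\<Sum>i. ennreal c * ennreal (diameter (U i) powr s))"
    proof (intro suminf_le allI)
      fix i
      have "diameter (V i) powr s \<le> (C * diameter (U i)) powr s"
        using V_diam[of i] diameter_ge_0[OF V_bounded[of i]] s by (intro powr_mono2) auto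
      also have "\<dots> = c * diameter (U i) powr s"
        using C diameter_ge_0[OF U_bounded[of i]] by (simp add: c_def powr_mult)
      finally show "ennreal (diameter (V i) powr s) \<le> ennreal c * ennreal (diameter (U i) powr s)"
        using c by (simp add: ennreal_mult[symmetric] ennreal_leI)
    qed auto
    also have "\<dots> = ennreal c * (\<Sum>i. ennreal (diameter (U i) powr s))"
      by simp
    also have "\<dots> \<le> ennreal c * ennreal (e / c)"
      using U_sum by (intro mult_left_mono) auto
    also have "\<dots> = ennreal e"
      using c e by (simp add: ennreal_mult[symmetric])
    finally show "hausdorff_pre s \<delta> (g ` E) \<le> 0 + ennreal e"
      by simp
  qed
  then show ?thesis
    by simp
qed

lemma hausdorff_measure_lipschitz_image_eq_0:
  fixes g :: "'a::metric_space \<Rightarrow> 'b::metric_space"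
  assumes lip: "C-lipschitz_on E g" and s: "s > 0" and null: "hausdorff_measure s E = 0"
  shows "hausdorff_measure s (g ` E) = 0"
proof -
  have lip': "(C + 1)-lipschitz_on E g" and C': "C + 1 > 0"
    using lipschitz_on_mono[OF lip] lipschitz_on_nonneg[OF lip] by auto
  show ?thesis
    using null hausdorff_pre_lipschitz_image_eq_0[OF lip' C' s] C'
    by (simp add: hausdorff_measure_eq_0_iff)
qed

lemma hausdorff_dim_lipschitz_image_le:
  fixes g :: "'a::metric_space \<Rightarrow> 'b::metric_space"
  assumes "C-lipschitz_on E g"
  shows "hausdorff_dim (g ` E) \<le> hausdorff_dim E"
  unfolding hausdorff_dim_def
  by (rule INF_superset_mono) (auto intro: hausdorff_measure_lipschitz_image_eq_0[OF assms])

lemma hitting_set_eq_lipschitz_image: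
  fixes \<phi> :: "'a::real_normed_vector \<Rightarrow> 'b::real_normed_vector \<Rightarrow> 'c::real_normed_vector"
  assumes C0: "C0 \<ge> 0" and lip: "\<forall>t\<in>D. \<forall>x\<in>B. \<forall>y\<in>B. norm (\<phi> t x - \<phi> t y) \<le> C0 * norm (x - y)"
    and M0: "M0 > 0" and sep: "\<forall>x\<in>B. \<forall>t\<in>D. \<forall>t'\<in>D. norm (\<phi> t' x - \<phi> t x) \<ge> M0 * norm (t' - t)"
  obtains S g where "S \<subseteq> A \<times> B" and "((C0 + 1) / M0)-lipschitz_on S g"
    and "{t \<in> D. \<phi> t ` B \<inter> A \<noteq> {}} = g ` S"
proof -
  have dist_param_le: "M0 * dist t t' \<le> C0 * dist x x' + dist (\<phi> t x) (\<phi> t' x')"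
    if "t \<in> D" "t' \<in> D" "x \<in> B" "x' \<in> B" for t t' x x'
  proof -
    have "M0 * dist t t' \<le> norm (\<phi> t' x - \<phi> t x)"
      using sep that by (simp add: dist_norm norm_minus_commute)
    also have "\<dots> \<le> norm (\<phi> t' x - \<phi> t' x') + norm (\<phi> t' x' - \<phi> t x)"
      using norm_triangle_ineq[of "\<phi> t' x - \<phi> t' x'" "\<phi> t' x' - \<phi> t x"] by simp
    also have "\<dots> \<le> C0 * dist x x' + dist (\<phi> t x) (\<phi> t' x')"
      using lip that by (simp add: add_mono dist_norm norm_minus_commute)
    finally show ?thesis .
  qed
  define S where "S = {p \<in> A \<times> B. \<exists>t\<in>D. \<phi> t (snd p) = fst p}"
  define g where "g p = (SOME t. t \<in> D \<and> \<phi> t (snd p) = fst p)" for p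
  have g: "g p \<in> D" "\<phi> (g p) (snd p) = fst p" if "p \<in> S" for p
    using someI_ex[of "\<lambda>t. t \<in> D \<and> \<phi> t (snd p) = fst p"] that by (auto simp: S_def g_def)
  have "S \<subseteq> A \<times> B"
    by (auto simp: S_def)
  moreover have "((C0 + 1) / M0)-lipschitz_on S g"
  proof (rule lipschitz_onI)
    fix p q assume p: "p \<in> S" and q: "q \<in> S"
    have "M0 * dist (g p) (g q) \<le> C0 * dist (snd p) (snd q) + dist (fst p) (fst q)"
      using dist_param_le[of "g p" "g q" "snd p" "snd q"] g[OF p] g[OF q] p q by (auto simp: S_def)
    also have "\<dots> \<le> (C0 + 1) * dist p q"
      using dist_snd_le[of p q] dist_fst_le[of p q] C0 by (simp add: distrib_right mult_left_mono add_mono)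
    finally show "dist (g p) (g q) \<le> (C0 + 1) / M0 * dist p q"
      using M0 by (simp add: field_simps)
  qed (use C0 M0 in simp)
  moreover have "{t \<in> D. \<phi> t ` B \<inter> A \<noteq> {}} = g ` S"
  proof
    show "g ` S \<subseteq> {t \<in> D. \<phi> t ` B \<inter> A \<noteq> {}}"
      using g by (force simp: S_def)
    show "{t \<in> D. \<phi> t ` B \<inter> A \<noteq> {}} \<subseteq> g ` S"
    proof
      fix t assume "t \<in> {t \<in> D. \<phi> t ` B \<inter> A \<noteq> {}}"
      then obtain x where t: "t \<in> D" and x: "x \<in> B" "\<phi> t x \<in> A" by blast
      then have p: "(\<phi> t x, x) \<in> S"
        by (auto simp: S_def)
      have "M0 * dist (g (\<phi> t x, x)) t \<le> 0"
        using dist_param_le[of "g (\<phi> t x, x)" t x x] g[OF p] t x by simp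
      then have "t = g (\<phi> t x, x)"
        using M0 by (simp add: mult_le_0_iff)
      with p show "t \<in> g ` S" by blast
    qed
  qed
  ultimately show thesis by (rule that)
qed

lemma closedin_hitting_set:
  fixes \<phi> :: "'a::euclidean_space \<Rightarrow> 'b::euclidean_space \<Rightarrow> 'c::t2_space"
  assumes "compact A" and "compact B" and cont: "continuous_on (D \<times> B) (\<lambda>(t, x). \<phi> t x)"
  shows "closedin (top_of_set D) {t \<in> D. \<phi> t ` B \<inter> A \<noteq> {}}"
proof -
  have "continuous_on (B \<times> D) ((\<lambda>(t, x). \<phi> t x) \<circ> prod.swap)"
    by (rule continuous_on_compose[OF continuous_on_swap]) (use cont in \<open>simp add: product_swap\<close>)
  then have "continuous_on (B \<times> D) (\<lambda>(x, t). \<phi> t x)"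
    by (simp add: comp_def case_prod_beta)
  then have "closedin (top_of_set (B \<times> D)) ((B \<times> D) \<inter> (\<lambda>(x, t). \<phi> t x) -` A)"
    by (rule continuous_closedin_preimage) (rule compact_imp_closed[OF \<open>compact A\<close>])
  then have "closedin (top_of_set D)
      {t. \<exists>x. x \<in> B \<and> (x, t) \<in> (B \<times> D) \<inter> (\<lambda>(x, t). \<phi> t x) -` A}"
    by (rule closedin_compact_projection[OF \<open>compact B\<close>])
  moreover have "{t. \<exists>x. x \<in> B \<and> (x, t) \<in> (B \<times> D) \<inter> (\<lambda>(x, t). \<phi> t x) -` A}
      = {t \<in> D. \<phi> t ` B \<inter> A \<noteq> {}}"
    by auto
  ultimately show ?thesis
    by simp
qed


theorem corollary2:
  fixes A B D :: "'a::euclidean_space set"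
    and \<phi> :: "'a \<Rightarrow> 'a \<Rightarrow> 'a"
  assumes lip: "\<exists>C0>0. \<forall>t\<in>D. \<forall>x\<in>B. \<forall>y\<in>B. norm (\<phi> t x - \<phi> t y) \<le> C0 * norm (x - y)"
    and sep: "\<exists>M0>0. \<forall>x\<in>B. \<forall>t\<in>D. \<forall>t'\<in>D. norm (\<phi> t' x - \<phi> t x) \<ge> M0 * norm (t' - t)"
  shows "hausdorff_dim {t \<in> D. \<phi> t ` B \<inter> A \<noteq> {}}
           \<le> min (hausdorff_dim (A \<times> B)) (hausdorff_dim D) \<and>
         (compact A \<and> compact B \<and> continuous_on (D \<times> B) (\<lambda>(t, x). \<phi> t x) \<longrightarrow>
           closedin (top_of_set D) {t \<in> D. \<phi> t ` B \<inter> A \<noteq> {}})"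
proof -
  obtain C0 M0 where C0: "C0 > 0" "\<forall>t\<in>D. \<forall>x\<in>B. \<forall>y\<in>B. norm (\<phi> t x - \<phi> t y) \<le> C0 * norm (x - y)"
    and M0: "M0 > 0" "\<forall>x\<in>B. \<forall>t\<in>D. \<forall>t'\<in>D. norm (\<phi> t' x - \<phi> t x) \<ge> M0 * norm (t' - t)"
    using lip sep by blast
  obtain S g where S: "S \<subseteq> A \<times> B" and g: "((C0 + 1) / M0)-lipschitz_on S g"
    and hitting_set: "{t \<in> D. \<phi> t ` B \<inter> A \<noteq> {}} = g ` S"
    using hitting_set_eq_lipschitz_image[of C0 D B \<phi> M0 A] C0 M0 by auto
  have "hausdorff_dim (g ` S) \<le> hausdorff_dim (A \<times> B)"
    using hausdorff_dim_lipschitz_image_le[OF g] hausdorff_dim_mono[OF S] by (rule order.trans)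
  moreover have "hausdorff_dim {t \<in> D. \<phi> t ` B \<inter> A \<noteq> {}} \<le> hausdorff_dim D"
    by (rule hausdorff_dim_mono) auto
  ultimately show ?thesis
    using closedin_hitting_set[of A B D \<phi>] hitting_set by auto
qed

end
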